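(* Let $C_{1/3}$ be the middle-third Cantor set and $C(1/3)=C_{1/3}\times C_{1/3}$. For every $\mathbf{t}\in C(1/3)$, the pinned distance set $\Delta_{\mathbf{t}}(C(1/3))=\{\|\mathbf{c}-\mathbf{t}\|_2:\mathbf{c}\in C(1/3)\}$ has non-empty interior.
   Context: $C_{1/3}=\{\tfrac23\sum_{k\ge1}a_k3^{-(k-1)}:a_k\in\{0,1\}\}$; $\|\cdot\|_2$ is the Euclidean norm on $\mathbb{R}^2$. *)

theory Defs
  imports "HOL-Analysis.Analysis"
begin

text \<open>Middle-third Cantor set, defined via digit expansions as in the paper:
  C = { 2/3 * sum_{k>=1} a_k 3^{-(k-1)} : a_k in {0,1} }. Index shifted to start at 0.\<close>
definition cantor_third :: "real set" where
  "cantor_third = {(2/3) * (\<Sum>k. a k * (1/3) ^ k) | a :: nat \<Rightarrow> real. \<forall>k. a k \<in> {0, 1}}"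

text \<open>C(1/3) = C_{1/3} x C_{1/3} in R^2 (real x real carries the Euclidean norm).\<close>
definition cantor_square :: "(real \<times> real) set" where
  "cantor_square = cantor_third \<times> cantor_third"

definition pinned_distance_set :: "(real \<times> real) \<Rightarrow> (real \<times> real) set \<Rightarrow> real set" where
  "pinned_distance_set t A = {norm (c - t) | c. c \<in> A}"

end

theory Submission
  imports Defs
begin

text \<open>The reflections \<open>x \<mapsto> 1 - x\<close> in either coordinate and the swap of coordinates
  preserve \<open>C(1/3)\<close> and distances, so we may assume \<open>t\<close> lies in \<open>[0, 1/3]\<^sup>2\<close> with
  \<open>t\<^sub>2 \<le> t\<^sub>1\<close>. For points of \<open>C(1/3)\<close> in the sub-square \<open>[2/3, 7/9] \<times> [8/9, 1]\<close>, the squared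
  distance to \<open>t\<close>, scaled by 81, is \<open>(U + p)\<^sup>2 + (V + q)\<^sup>2\<close> with \<open>p, q\<close> in the Cantor set and
  \<open>U + 1 \<le> V \<le> 3U - 1\<close>. Such a function attains every value \<open>r\<close> between its values at
  \<open>(0, 0)\<close> and \<open>(1, 1)\<close>: if \<open>r\<close> lies between its values at the lower-left and upper-right
  corners of a square of side \<open>w\<close>, it does so for one of the four corner squares of side
  \<open>w/3\<close>, because the slope conditions make the ranges of these four squares overlap in a chain.
  The nested squares shrink to a point of the Cantor square, where the value is \<open>r\<close> by
  continuity.\<close>

lemma cantor_digits_summable:
  assumes "\<forall>k. a k \<in> {0::real, 1}"
  shows "summable (\<lambda>k. a k * (1/3::real) ^ k)"
proof (rule summable_comparison_test)
  show "\<exists>N. \<forall>n\<ge>N. norm (a n * (1/3::real) ^ n) \<le> (1/3) ^ n"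
  proof (intro exI allI impI)
    fix n
    have "a n = 0 \<or> a n = 1"
      using assms by auto
    then show "norm (a n * (1/3::real) ^ n) \<le> (1/3) ^ n"
      by auto
  qed
  show "summable (\<lambda>k. (1/3::real) ^ k)"
    by (rule summable_geometric) simp
qed

lemma cantor_digits_sum_Suc:
  assumes "\<forall>k. a k \<in> {0::real, 1}"
  shows "(\<Sum>k. a k * (1/3::real) ^ k) = a 0 + (\<Sum>k. a (Suc k) * (1/3) ^ k) / 3"
proof -
  have "summable (\<lambda>k. a (Suc k) * (1/3::real) ^ k)"
    using assms by (intro cantor_digits_summable) simp
  then have "(\<Sum>k. a (Suc k) * (1/3::real) ^ k / 3) = (\<Sum>k. a (Suc k) * (1/3) ^ k) / 3"
    by (rule suminf_divide)
  then show ?thesis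
    using suminf_split_head[OF cantor_digits_summable[OF assms]] by simp
qed

lemma cantor_third_cons:
  assumes "d \<in> {0, 1}" and "p \<in> cantor_third"
  shows "2/3 * d + p / 3 \<in> cantor_third"
proof -
  obtain a where a: "\<forall>k. a k \<in> {0::real, 1}" and p: "p = 2/3 * (\<Sum>k. a k * (1/3) ^ k)"
    using assms(2) unfolding cantor_third_def by auto
  define b where "b = case_nat d a"
  have b: "\<forall>k. b k \<in> {0::real, 1}"
    using a assms(1) by (auto simp: b_def split: nat.split)
  have "2/3 * d + p / 3 = 2/3 * (\<Sum>k. b k * (1/3) ^ k)"
    using cantor_digits_sum_Suc[OF b] p by (simp add: b_def)
  then show ?thesis
    using b unfolding cantor_third_def by blast
qed

lemma cantor_third_uncons:
  assumes "c \<in> cantor_third"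
  obtains d p where "d \<in> {0, 1}" "p \<in> cantor_third" "c = 2/3 * d + p / 3"
proof -
  obtain a where a: "\<forall>k. a k \<in> {0::real, 1}" and c: "c = 2/3 * (\<Sum>k. a k * (1/3) ^ k)"
    using assms unfolding cantor_third_def by auto
  have "2/3 * (\<Sum>k. a (Suc k) * (1/3) ^ k) \<in> cantor_third"
    using a unfolding cantor_third_def by (intro CollectI exI[of _ "\<lambda>k. a (Suc k)"]) simp
  with that show ?thesis
    using a c cantor_digits_sum_Suc[OF a] by auto
qed

lemma cantor_third_bounds:
  assumes "c \<in> cantor_third"
  shows "0 \<le> c \<and> c \<le> 1"
proof -
  obtain a where a: "\<forall>k. a k \<in> {0::real, 1}" and c: "c = 2/3 * (\<Sum>k. a k * (1/3) ^ k)"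
    using assms unfolding cantor_third_def by auto
  have digit: "0 \<le> a k \<and> a k \<le> 1" for k
    using a by (metis insertE singletonD order.refl zero_le_one)
  have "0 \<le> (\<Sum>k. a k * (1/3::real) ^ k)"
    using a digit by (intro suminf_nonneg cantor_digits_summable) auto
  moreover have "(\<Sum>k. a k * (1/3::real) ^ k) \<le> (\<Sum>k. (1/3) ^ k)"
    using a digit by (intro suminf_le cantor_digits_summable summable_geometric) auto
  moreover have "(\<Sum>k. (1/3::real) ^ k) = 3/2"
    by (subst suminf_geometric) auto
  ultimately show ?thesis
    using c by simp
qed

lemma cantor_third_reflect:
  assumes "c \<in> cantor_third"
  shows "1 - c \<in> cantor_third"
proof -
  obtain a where a: "\<forall>k. a k \<in> {0::real, 1}" and c: "c = 2/3 * (\<Sum>k. a k * (1/3) ^ k)"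
    using assms unfolding cantor_third_def by auto
  define b where "b k = 1 - a k" for k
  have b: "\<forall>k. b k \<in> {0::real, 1}"
    using a by (auto simp: b_def)
  have "(\<Sum>k. b k * (1/3::real) ^ k) = (\<Sum>k. (1/3) ^ k) - (\<Sum>k. a k * (1/3) ^ k)"
    unfolding b_def left_diff_distrib mult_1
    by (rule suminf_diff[symmetric]) (simp_all add: cantor_digits_summable[OF a] summable_geometric)
  also have "(\<Sum>k. (1/3::real) ^ k) = 3/2"
    by (subst suminf_geometric) auto
  finally have "1 - c = 2/3 * (\<Sum>k. b k * (1/3) ^ k)"
    using c by simp
  then show ?thesis
    using b unfolding cantor_third_def by blast
qed

lemma cantor_third_reflect_into_first_third:
  assumes "c \<in> cantor_third"
  obtains s where "s \<in> {c, 1 - c}" "0 \<le> s" "s \<le> 1/3"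
proof -
  obtain d p where "d \<in> {0, 1}" "p \<in> cantor_third" "c = 2/3 * d + p / 3"
    using cantor_third_uncons[OF assms] .
  with cantor_third_bounds[of p] that show ?thesis
    by auto
qed

lemma cantor_square_nested_brackets:
  fixes G :: "real \<times> real \<Rightarrow> real"
  assumes refine: "\<And>P Q w. 0 < w \<Longrightarrow> 0 \<le> P \<Longrightarrow> 0 \<le> Q \<Longrightarrow> P + w \<le> 1 \<Longrightarrow> Q + w \<le> 1 \<Longrightarrow>
      G (P, Q) \<le> r \<Longrightarrow> r \<le> G (P + w, Q + w) \<Longrightarrow>
      \<exists>i\<in>{0, 1}. \<exists>j\<in>{0, 1}. G (P + 2/3 * w * i, Q + 2/3 * w * j) \<le> r \<and>
        r \<le> G (P + 2/3 * w * i + w/3, Q + 2/3 * w * j + w/3)"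
    and "G (0, 0) \<le> r" "r \<le> G (1, 1)"
  obtains a b :: "nat \<Rightarrow> real" where "\<And>n. a n \<in> {0, 1}" "\<And>n. b n \<in> {0, 1}"
    "\<And>n. G (2/3 * (\<Sum>k<n. a k * (1/3) ^ k), 2/3 * (\<Sum>k<n. b k * (1/3) ^ k)) \<le> r"
    "\<And>n. r \<le> G (2/3 * (\<Sum>k<n. a k * (1/3) ^ k) + (1/3) ^ n, 2/3 * (\<Sum>k<n. b k * (1/3) ^ k) + (1/3) ^ n)"
proof -
  \<comment> \<open>The clause for \<open>n = 0\<close> pins the first square, which \<open>dependent_nat_choice\<close> leaves open.\<close>
  define inv where "inv n x \<longleftrightarrow> (n = 0 \<longrightarrow> x = (0, 0)) \<and>
    0 \<le> fst x \<and> 0 \<le> snd x \<and> fst x + (1/3) ^ n \<le> 1 \<and> snd x + (1/3) ^ n \<le> 1 \<and>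
    G x \<le> r \<and> r \<le> G (fst x + (1/3) ^ n, snd x + (1/3) ^ n)" for n and x :: "real \<times> real"
  define step where "step n x y \<longleftrightarrow> (\<exists>i\<in>{0, 1}. \<exists>j\<in>{0, 1}.
    y = (fst x + 2/3 * (1/3) ^ n * i, snd x + 2/3 * (1/3) ^ n * j))" for n and x y :: "real \<times> real"
  have "\<exists>f. \<forall>n. inv n (f n) \<and> step n (f n) (f (Suc n))"
  proof (rule dependent_nat_choice)
    show "\<exists>x. inv 0 x"
      using assms(2,3) by (auto simp: inv_def)
  next
    fix x n
    assume "inv n x"
    obtain P Q where x: "x = (P, Q)"
      by force
    define w where "w = (1/3::real) ^ n"
    have "\<exists>i\<in>{0, 1}. \<exists>j\<in>{0, 1}. G (P + 2/3 * w * i, Q + 2/3 * w * j) \<le> r \<and>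
        r \<le> G (P + 2/3 * w * i + w/3, Q + 2/3 * w * j + w/3)"
      using \<open>inv n x\<close> unfolding inv_def x w_def by (intro refine) auto
    then obtain i j where ij: "i \<in> {0, 1}" "j \<in> {0, 1}"
      "G (P + 2/3 * w * i, Q + 2/3 * w * j) \<le> r"
      "r \<le> G (P + 2/3 * w * i + w/3, Q + 2/3 * w * j + w/3)"
      by blast
    have "0 \<le> w * i \<and> w * i \<le> w" "0 \<le> w * j \<and> w * j \<le> w" "(1/3) ^ Suc n = w/3"
      using ij(1,2) by (auto simp: w_def)
    with \<open>inv n x\<close> ij have "inv (Suc n) (P + 2/3 * w * i, Q + 2/3 * w * j)"
      unfolding inv_def x fst_conv snd_conv w_def[symmetric] by (auto simp: add.assoc)
    moreover have "step n x (P + 2/3 * w * i, Q + 2/3 * w * j)"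
      using ij(1,2) by (auto simp: step_def x w_def)
    ultimately show "\<exists>y. inv (Suc n) y \<and> step n x y"
      by blast
  qed
  then obtain f where inv: "\<And>n. inv n (f n)" and step: "\<And>n. step n (f n) (f (Suc n))"
    by blast
  obtain a b where ab: "\<And>n. a n \<in> {0, 1}" "\<And>n. b n \<in> {0, 1}"
    and f_Suc: "\<And>n. f (Suc n) = (fst (f n) + 2/3 * (1/3) ^ n * a n, snd (f n) + 2/3 * (1/3) ^ n * b n)"
    using step unfolding step_def by metis
  have f: "f n = (2/3 * (\<Sum>k<n. a k * (1/3) ^ k), 2/3 * (\<Sum>k<n. b k * (1/3) ^ k))" for n
  proof (induction n)
    case 0
    then show ?case
      using inv[of 0] by (simp add: inv_def)
  next
    case (Suc n)
    then show ?case
      by (simp add: f_Suc algebra_simps)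
  qed
  show ?thesis
  proof (rule that[OF ab])
    fix n
    show "G (2/3 * (\<Sum>k<n. a k * (1/3) ^ k), 2/3 * (\<Sum>k<n. b k * (1/3) ^ k)) \<le> r"
      and "r \<le> G (2/3 * (\<Sum>k<n. a k * (1/3) ^ k) + (1/3) ^ n, 2/3 * (\<Sum>k<n. b k * (1/3) ^ k) + (1/3) ^ n)"
      using inv[of n] unfolding inv_def f fst_conv snd_conv by blast+
  qed
qed

lemma cantor_square_attains_bracketed_value:
  fixes G :: "real \<times> real \<Rightarrow> real"
  assumes cont: "continuous_on UNIV G"
    and refine: "\<And>P Q w. 0 < w \<Longrightarrow> 0 \<le> P \<Longrightarrow> 0 \<le> Q \<Longrightarrow> P + w \<le> 1 \<Longrightarrow> Q + w \<le> 1 \<Longrightarrow>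
      G (P, Q) \<le> r \<Longrightarrow> r \<le> G (P + w, Q + w) \<Longrightarrow>
      \<exists>i\<in>{0, 1}. \<exists>j\<in>{0, 1}. G (P + 2/3 * w * i, Q + 2/3 * w * j) \<le> r \<and>
        r \<le> G (P + 2/3 * w * i + w/3, Q + 2/3 * w * j + w/3)"
    and "G (0, 0) \<le> r" "r \<le> G (1, 1)"
  shows "\<exists>p\<in>cantor_third. \<exists>q\<in>cantor_third. G (p, q) = r"
proof -
  obtain a b where ab: "\<And>n. a n \<in> {0, 1}" "\<And>n. b n \<in> {0, 1}"
    and lower: "\<And>n. G (2/3 * (\<Sum>k<n. a k * (1/3) ^ k), 2/3 * (\<Sum>k<n. b k * (1/3) ^ k)) \<le> r"
    and upper: "\<And>n. r \<le> G (2/3 * (\<Sum>k<n. a k * (1/3) ^ k) + (1/3) ^ n,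
      2/3 * (\<Sum>k<n. b k * (1/3) ^ k) + (1/3) ^ n)"
    using cantor_square_nested_brackets[OF refine assms(3,4)] by blast
  define p where "p = 2/3 * (\<Sum>k. a k * (1/3::real) ^ k)"
  define q where "q = 2/3 * (\<Sum>k. b k * (1/3::real) ^ k)"
  have pq: "p \<in> cantor_third" "q \<in> cantor_third"
    unfolding p_def q_def cantor_third_def using ab by blast+
  have lim_p: "(\<lambda>n. 2/3 * (\<Sum>k<n. a k * (1/3) ^ k)) \<longlonglongrightarrow> p"
    and lim_q: "(\<lambda>n. 2/3 * (\<Sum>k<n. b k * (1/3) ^ k)) \<longlonglongrightarrow> q"
    unfolding p_def q_def
    by (intro tendsto_mult_left summable_LIMSEQ cantor_digits_summable; use ab in blast)+
  have lim_0: "(\<lambda>n. (1/3::real) ^ n) \<longlonglongrightarrow> 0"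
    by (rule LIMSEQ_realpow_zero) auto
  have "isCont G (p, q)" "isCont G (p + 0, q + 0)"
    using cont by (simp_all add: continuous_on_eq_continuous_at)
  then have "G (p, q) \<le> r" and "r \<le> G (p + 0, q + 0)"
    using LIMSEQ_le_const2[OF isCont_tendsto_compose[OF _ tendsto_Pair[OF lim_p lim_q]]] lower
      LIMSEQ_le_const[OF isCont_tendsto_compose[OF _
        tendsto_Pair[OF tendsto_add[OF lim_p lim_0] tendsto_add[OF lim_q lim_0]]]] upper
    by blast+
  with pq show ?thesis
    by force
qed

lemma sum_squares_corner_refine:
  fixes u v w r :: real
  assumes "0 < w" "u + w/3 \<le> v" "v \<le> 3 * u + w"
    and "u\<^sup>2 + v\<^sup>2 \<le> r" "r \<le> (u + w)\<^sup>2 + (v + w)\<^sup>2"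
  shows "\<exists>i\<in>{0, 1}. \<exists>j\<in>{0, 1}. (u + 2/3 * w * i)\<^sup>2 + (v + 2/3 * w * j)\<^sup>2 \<le> r \<and>
           r \<le> (u + 2/3 * w * i + w/3)\<^sup>2 + (v + 2/3 * w * j + w/3)\<^sup>2"
proof -
  define lo where "lo i j = (u + 2/3 * w * i)\<^sup>2 + (v + 2/3 * w * j)\<^sup>2" for i j :: real
  define hi where "hi i j = (u + 2/3 * w * i + w/3)\<^sup>2 + (v + 2/3 * w * j + w/3)\<^sup>2" for i j :: real
  have "hi 0 0 - lo 1 0 = 2/3 * w * (v - u - w/3)"
    and "hi 1 0 - lo 0 1 = 2/3 * w * (3 * u + w - v)"
    and "hi 0 1 - lo 1 1 = 2/3 * w * (v - u + w/3)"
    unfolding lo_def hi_def by (simp_all add: power2_eq_square algebra_simps)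
  moreover have "0 \<le> 2/3 * w * (v - u - w/3)" "0 \<le> 2/3 * w * (3 * u + w - v)"
    "0 \<le> 2/3 * w * (v - u + w/3)"
    using assms(1-3) by simp_all
  moreover have "lo 0 0 \<le> r" "r \<le> hi 1 1"
    using assms(4,5) by (simp_all add: lo_def hi_def add.assoc)
  ultimately have "(lo 0 0 \<le> r \<and> r \<le> hi 0 0) \<or> (lo 1 0 \<le> r \<and> r \<le> hi 1 0) \<or>
      (lo 0 1 \<le> r \<and> r \<le> hi 0 1) \<or> (lo 1 1 \<le> r \<and> r \<le> hi 1 1)"
    by linarith
  then show ?thesis
    unfolding lo_def hi_def by auto
qed

lemma cantor_square_attains_sum_squares:
  fixes U V r :: real
  assumes "U + 1 \<le> V" "V + 1 \<le> 3 * U"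
    and "U\<^sup>2 + V\<^sup>2 \<le> r" "r \<le> (U + 1)\<^sup>2 + (V + 1)\<^sup>2"
  shows "\<exists>p\<in>cantor_third. \<exists>q\<in>cantor_third. (U + p)\<^sup>2 + (V + q)\<^sup>2 = r"
proof -
  define G where "G z = (U + fst z)\<^sup>2 + (V + snd z)\<^sup>2" for z :: "real \<times> real"
  have "\<exists>p\<in>cantor_third. \<exists>q\<in>cantor_third. G (p, q) = r"
  proof (rule cantor_square_attains_bracketed_value)
    show "continuous_on UNIV G"
      unfolding G_def by (intro continuous_intros)
    show "G (0, 0) \<le> r" "r \<le> G (1, 1)"
      using assms(3,4) by (simp_all add: G_def)
    fix P Q w :: real
    assume "0 < w" "0 \<le> P" "0 \<le> Q" "P + w \<le> 1" "Q + w \<le> 1" "G (P, Q) \<le> r"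
      "r \<le> G (P + w, Q + w)"
    with assms(1,2) show "\<exists>i\<in>{0, 1}. \<exists>j\<in>{0, 1}. G (P + 2/3 * w * i, Q + 2/3 * w * j) \<le> r \<and>
        r \<le> G (P + 2/3 * w * i + w/3, Q + 2/3 * w * j + w/3)"
      using sum_squares_corner_refine[of w "U + P" "V + Q" r]
      by (simp add: G_def add.assoc)
  qed
  then show ?thesis
    by (simp add: G_def)
qed

lemma pinned_distance_set_cantor_square_interval:
  fixes t1 t2 :: real
  assumes "0 \<le> t2" "t2 \<le> t1" "t1 \<le> 1/3"
  defines "U \<equiv> 6 - 9 * t1" and "V \<equiv> 8 - 9 * t2"
  shows "{sqrt (U\<^sup>2 + V\<^sup>2) / 9 .. sqrt ((U + 1)\<^sup>2 + (V + 1)\<^sup>2) / 9}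
    \<subseteq> pinned_distance_set (t1, t2) cantor_square"
proof
  fix d
  assume d: "d \<in> {sqrt (U\<^sup>2 + V\<^sup>2) / 9 .. sqrt ((U + 1)\<^sup>2 + (V + 1)\<^sup>2) / 9}"
  have "sqrt (U\<^sup>2 + V\<^sup>2) \<le> 9 * d"
    using d by simp
  then have lower: "U\<^sup>2 + V\<^sup>2 \<le> (9 * d)\<^sup>2"
    by (rule sqrt_le_D)
  have "0 \<le> sqrt (U\<^sup>2 + V\<^sup>2)"
    by simp
  with \<open>sqrt (U\<^sup>2 + V\<^sup>2) \<le> 9 * d\<close> have "0 \<le> d"
    by linarith
  have "(9 * d)\<^sup>2 \<le> (sqrt ((U + 1)\<^sup>2 + (V + 1)\<^sup>2))\<^sup>2"
    using d \<open>0 \<le> d\<close> by (intro power_mono) auto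
  then have upper: "(9 * d)\<^sup>2 \<le> (U + 1)\<^sup>2 + (V + 1)\<^sup>2"
    by simp
  have "U + 1 \<le> V" "V + 1 \<le> 3 * U"
    using assms(1-3) by (simp_all add: U_def V_def)
  then obtain p q where pq: "p \<in> cantor_third" "q \<in> cantor_third"
    "(U + p)\<^sup>2 + (V + q)\<^sup>2 = (9 * d)\<^sup>2"
    using cantor_square_attains_sum_squares[OF _ _ lower upper] by blast
  have "2/3 + p/9 \<in> cantor_third"
    using cantor_third_cons[of 1 "2/3 * 0 + p/3"] cantor_third_cons[of 0 p] pq(1) by simp
  moreover have "8/9 + q/9 \<in> cantor_third"
    using cantor_third_cons[of 1 "2/3 * 1 + q/3"] cantor_third_cons[of 1 q] pq(2) by (simp add: field_simps)
  ultimately have c: "(2/3 + p/9, 8/9 + q/9) \<in> cantor_square"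
    by (simp add: cantor_square_def)
  have "(2/3 + p/9, 8/9 + q/9) - (t1, t2) = ((U + p) / 9, (V + q) / 9)"
    by (simp add: U_def V_def field_simps)
  then have "norm ((2/3 + p/9, 8/9 + q/9) - (t1, t2)) = sqrt (((U + p) / 9)\<^sup>2 + ((V + q) / 9)\<^sup>2)"
    by (simp only: norm_Pair real_norm_def power2_abs fst_conv snd_conv)
  also have "\<dots> = sqrt ((9 * d)\<^sup>2 / 81)"
    unfolding pq(3)[symmetric] by (simp add: power2_eq_square field_simps)
  also have "\<dots> = d"
    using \<open>0 \<le> d\<close> by (simp add: power_divide[symmetric])
  finally show "d \<in> pinned_distance_set (t1, t2) cantor_square"
    unfolding pinned_distance_set_def using c by blast
qed

lemma pinned_distance_set_involution:
  fixes T :: "real \<times> real \<Rightarrow> real \<times> real"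
  assumes "T ` A \<subseteq> A" "\<And>x. T (T x) = x" "\<And>x y. norm (T x - T y) = norm (x - y)"
  shows "pinned_distance_set (T t) A = pinned_distance_set t A"
proof -
  have sub: "pinned_distance_set (T s) A \<subseteq> pinned_distance_set s A" for s
  proof
    fix d
    assume "d \<in> pinned_distance_set (T s) A"
    then obtain c where "c \<in> A" "d = norm (c - T s)"
      unfolding pinned_distance_set_def by blast
    moreover have "norm (c - T s) = norm (T c - s)"
      using assms(3)[of "T c" s] assms(2)[of c] by simp
    ultimately show "d \<in> pinned_distance_set s A"
      unfolding pinned_distance_set_def using assms(1) by blast
  qed
  show ?thesis
    using sub[of t] sub[of "T t"] assms(2)[of t] by simp
qed

lemma pinned_distance_set_cantor_square_reflect_fst:
  "pinned_distance_set (1 - t1, t2) cantor_square = pinned_distance_set (t1, t2) cantor_square"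
  using pinned_distance_set_involution[of "\<lambda>z. (1 - fst z, snd z)" cantor_square "(t1, t2)"]
  by (auto simp: image_subset_iff cantor_square_def cantor_third_reflect norm_Pair power2_commute)

lemma pinned_distance_set_cantor_square_reflect_snd:
  "pinned_distance_set (t1, 1 - t2) cantor_square = pinned_distance_set (t1, t2) cantor_square"
  using pinned_distance_set_involution[of "\<lambda>z. (fst z, 1 - snd z)" cantor_square "(t1, t2)"]
  by (auto simp: image_subset_iff cantor_square_def cantor_third_reflect norm_Pair power2_commute)

lemma pinned_distance_set_cantor_square_swap:
  "pinned_distance_set (t2, t1) cantor_square = pinned_distance_set (t1, t2) cantor_square"
  using pinned_distance_set_involution[of "\<lambda>z. (snd z, fst z)" cantor_square "(t1, t2)"]
  by (auto simp: image_subset_iff cantor_square_def norm_Pair add.commute)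

lemma interior_pinned_distance_set_cantor_square_quarter:
  fixes t1 t2 :: real
  assumes "0 \<le> t1" "t1 \<le> 1/3" "0 \<le> t2" "t2 \<le> 1/3"
  shows "interior (pinned_distance_set (t1, t2) cantor_square) \<noteq> {}"
proof -
  have "pinned_distance_set (t2, t1) cantor_square = pinned_distance_set (t1, t2) cantor_square"
    by (rule pinned_distance_set_cantor_square_swap)
  then obtain s1 s2 where s: "0 \<le> s2" "s2 \<le> s1" "s1 \<le> 1/3"
    and eq: "pinned_distance_set (s1, s2) cantor_square = pinned_distance_set (t1, t2) cantor_square"
    using assms by (metis nle_le)
  define U where "U = 6 - 9 * s1"
  define V where "V = 8 - 9 * s2"
  have "0 \<le> U" "0 \<le> V"
    using s by (simp_all add: U_def V_def)
  then have "U\<^sup>2 + V\<^sup>2 < (U + 1)\<^sup>2 + (V + 1)\<^sup>2"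
    by (simp add: power2_eq_square algebra_simps)
  then have "sqrt (U\<^sup>2 + V\<^sup>2) / 9 < sqrt ((U + 1)\<^sup>2 + (V + 1)\<^sup>2) / 9"
    by simp
  moreover have "interior {sqrt (U\<^sup>2 + V\<^sup>2) / 9 .. sqrt ((U + 1)\<^sup>2 + (V + 1)\<^sup>2) / 9}
      \<subseteq> interior (pinned_distance_set (t1, t2) cantor_square)"
    using pinned_distance_set_cantor_square_interval[OF s] eq
    unfolding U_def V_def by (intro interior_mono) simp
  ultimately show ?thesis
    by (auto simp: interior_atLeastAtMost_real)
qed

theorem mainTheorem6:
  assumes "t \<in> cantor_square"
  shows "interior (pinned_distance_set t cantor_square) \<noteq> {}"
proof -
  obtain t1 t2 where t: "t = (t1, t2)" "t1 \<in> cantor_third" "t2 \<in> cantor_third"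
    using assms unfolding cantor_square_def by auto
  obtain s1 where s1: "s1 \<in> {t1, 1 - t1}" "0 \<le> s1" "s1 \<le> 1/3"
    using cantor_third_reflect_into_first_third[OF t(2)] .
  obtain s2 where s2: "s2 \<in> {t2, 1 - t2}" "0 \<le> s2" "s2 \<le> 1/3"
    using cantor_third_reflect_into_first_third[OF t(3)] .
  have "pinned_distance_set (s1, s2) cantor_square = pinned_distance_set t cantor_square"
    using s1(1) s2(1) t(1) pinned_distance_set_cantor_square_reflect_fst
      pinned_distance_set_cantor_square_reflect_snd by auto
  then show ?thesis
    using interior_pinned_distance_set_cantor_square_quarter[OF s1(2,3) s2(2,3)] by simp
qed

end
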